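(* Let $\mathbf{T}$ be a totally ordered set and $\Bbbk$ a field. The assignment $F\mapsto\mathcal{B}_F$, sending a homomorphism $F$ of pointwise finite-dimensional $\mathbf{T}$-persistence modules to the barcode of its image, defines a functor from the category of factorizations $\mathrm{Fact}(\mathbf{vec}^{\mathbf{T}})$ to the poset $\mathbf{SBar}_{\mathbf{T}}$. Equivalently: whenever $F:\mathbb{U}\to\mathbb{V}$ and $G:\mathbb{T}'\to\mathbb{W}$ are homomorphisms of pointwise finite-dimensional $\mathbf{T}$-persistence modules and there exist homomorphisms $\varphi_1:\mathbb{T}'\to\mathbb{U}$ and $\varphi_2:\mathbb{V}\to\mathbb{W}$ with $G=\varphi_2\circ F\circ\varphi_1$, we have $\mathcal{B}_G\sqsubseteq\mathcal{B}_F$.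
   Context: A $\mathbf{T}$-persistence module over a field $\Bbbk$ is a functor $\mathbb{V}:\mathbf{T}\to\mathbf{Vec}_\Bbbk$; homomorphisms are natural transformations; it is pointwise finite-dimensional (p.f.d.) if each $\mathbb{V}(t)$ is finite-dimensional; $\mathbf{vec}^{\mathbf{T}}$ denotes the category of p.f.d. $\mathbf{T}$-modules. An interval in $\mathbf{T}$ is a nonempty convex subset; $\mathcal{I}_{\mathbf{T}}$ is the set of intervals. A $\mathbf{T}$-indexed barcode is a function $\mathcal{B}:\mathrm{Rep}(\mathcal{B})\to\mathcal{I}_{\mathbf{T}}$ from a set of bars. Every p.f.d. $\mathbf{T}$-module $\mathbb{V}$ is isomorphic to $\bigoplus_{\beta\in\mathrm{Rep}(\mathcal{B}_\mathbb{V})}\Bbbk_{\mathcal{B}_\mathbb{V}(\beta)}$ for a barcode $\mathcal{B}_\mathbb{V}$, unique up to bijection of bars, where $\Bbbk_I$ is the interval module ($\Bbbk$ on $I$, $0$ elsewhere, identity maps within $I$). For a homomorphism $F$, $\mathcal{B}_F:=\mathcal{B}_{\mathrm{im}\,F}$. A matching $M\subseteq\mathrm{Rep}(\mathcal{A})\times\mathrm{Rep}(\mathcal{B})$ relates each element to at most one other element; it is injective if every $\alpha\in\mathrm{Rep}(\mathcal{A})$ is matched. It is a sub-barcode matching if $\mathcal{A}(\alpha)\subseteq\mathcal{B}(\beta)$ for all $(\alpha,\beta)\in M$. We write $\mathcal{A}\sqsubseteq\mathcal{B}$ ($\mathcal{A}$ is a sub-barcode of $\mathcal{B}$) if there is an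 injective sub-barcode matching from $\mathcal{A}$ to $\mathcal{B}$. $\mathbf{SBar}_{\mathbf{T}}$ is the poset of isomorphism classes of $\mathbf{T}$-indexed barcodes ordered by $\sqsubseteq$. The category of factorizations $\mathrm{Fact}(\mathbf{C})$ has as objects the morphisms of $\mathbf{C}$, and an arrow $G\rightleftharpoons F$ from $G:a\to d$ to $F:b\to c$ is a pair $(\varphi_1:a\to b,\varphi_2:c\to d)$ with $G=\varphi_2\circ F\circ\varphi_1$. *)

theory Defs
  imports Complex_Main "HOL-Library.Function_Algebras"
begin

text \<open>A module is represented by an
  ambient k-vector space (type 'v with scalar multiplication sc), a family of
  subspaces Sp t of it, and structure maps Mp s t (for s \<le> t).\<close>

definition is_interval :: "'t::linorder set \<Rightarrow> bool" where
  "is_interval I \<longleftrightarrow> I \<noteq> {} \<and> (\<forall>x\<in>I. \<forall>z\<in>I. \<forall>y. x \<le> y \<and> y \<le> z \<longrightarrow> y \<in> I)"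

definition lin_on :: "('k::field \<Rightarrow> 'v::ab_group_add \<Rightarrow> 'v) \<Rightarrow> ('k \<Rightarrow> 'w::ab_group_add \<Rightarrow> 'w)
    \<Rightarrow> 'v set \<Rightarrow> ('v \<Rightarrow> 'w) \<Rightarrow> bool" where
  "lin_on s1 s2 S f \<longleftrightarrow>
     (\<forall>x\<in>S. \<forall>y\<in>S. f (x + y) = f x + f y) \<and> (\<forall>c. \<forall>x\<in>S. f (s1 c x) = s2 c (f x))"

definition pmod :: "('k::field \<Rightarrow> 'v::ab_group_add \<Rightarrow> 'v) \<Rightarrow> ('t::linorder \<Rightarrow> 'v set)
    \<Rightarrow> ('t \<Rightarrow> 't \<Rightarrow> 'v \<Rightarrow> 'v) \<Rightarrow> bool" where
  "pmod sc Sp Mp \<longleftrightarrow>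
     vector_space sc \<and>
     (\<forall>t. module.subspace sc (Sp t)) \<and>
     (\<forall>s t. s \<le> t \<longrightarrow> lin_on sc sc (Sp s) (Mp s t) \<and> Mp s t ` Sp s \<subseteq> Sp t) \<and>
     (\<forall>t. \<forall>x\<in>Sp t. Mp t t x = x) \<and>
     (\<forall>r s t. r \<le> s \<longrightarrow> s \<le> t \<longrightarrow> (\<forall>x\<in>Sp r. Mp r t x = Mp s t (Mp r s x)))"

definition pfd :: "('k::field \<Rightarrow> 'v::ab_group_add \<Rightarrow> 'v) \<Rightarrow> ('t::linorder \<Rightarrow> 'v set) \<Rightarrow> bool" where
  "pfd sc Sp \<longleftrightarrow> (\<forall>t. \<exists>B. finite B \<and> B \<subseteq> Sp t \<and> module.span sc B = Sp t)"

definition phom :: "('k::field \<Rightarrow> 'v::ab_group_add \<Rightarrow> 'v) \<Rightarrow> ('t::linorder \<Rightarrow> 'v set) \<Rightarrow> ('t \<Rightarrow> 't \<Rightarrow> 'v \<Rightarrow> 'v)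
    \<Rightarrow> ('k \<Rightarrow> 'w::ab_group_add \<Rightarrow> 'w) \<Rightarrow> ('t \<Rightarrow> 'w set) \<Rightarrow> ('t \<Rightarrow> 't \<Rightarrow> 'w \<Rightarrow> 'w)
    \<Rightarrow> ('t \<Rightarrow> 'v \<Rightarrow> 'w) \<Rightarrow> bool" where
  "phom sc1 Sp1 Mp1 sc2 Sp2 Mp2 F \<longleftrightarrow>
     (\<forall>t. lin_on sc1 sc2 (Sp1 t) (F t) \<and> F t ` Sp1 t \<subseteq> Sp2 t) \<and>
     (\<forall>s t. s \<le> t \<longrightarrow> (\<forall>x\<in>Sp1 s. F t (Mp1 s t x) = Mp2 s t (F s x)))"

definition piso :: "('k::field \<Rightarrow> 'v::ab_group_add \<Rightarrow> 'v) \<Rightarrow> ('t::linorder \<Rightarrow> 'v set) \<Rightarrow> ('t \<Rightarrow> 't \<Rightarrow> 'v \<Rightarrow> 'v)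
    \<Rightarrow> ('k \<Rightarrow> 'w::ab_group_add \<Rightarrow> 'w) \<Rightarrow> ('t \<Rightarrow> 'w set) \<Rightarrow> ('t \<Rightarrow> 't \<Rightarrow> 'w \<Rightarrow> 'w)
    \<Rightarrow> ('t \<Rightarrow> 'v \<Rightarrow> 'w) \<Rightarrow> bool" where
  "piso sc1 Sp1 Mp1 sc2 Sp2 Mp2 F \<longleftrightarrow>
     phom sc1 Sp1 Mp1 sc2 Sp2 Mp2 F \<and> (\<forall>t. bij_betw (F t) (Sp1 t) (Sp2 t))"

text \<open>Image submodule of a homomorphism F : (Sp1,Mp1) \<rightarrow> (Sp2,Mp2):
  spaces F t ` Sp1 t with the structure maps of the codomain.\<close>
definition im_space :: "('t \<Rightarrow> 'v set) \<Rightarrow> ('t \<Rightarrow> 'v \<Rightarrow> 'w) \<Rightarrow> 't \<Rightarrow> 'w set" where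
  "im_space Sp1 F t = F t ` Sp1 t"

definition is_barcode :: "'b set \<Rightarrow> ('b \<Rightarrow> 't::linorder set) \<Rightarrow> bool" where
  "is_barcode R B \<longleftrightarrow> (\<forall>\<beta>\<in>R. is_interval (B \<beta>))"

text \<open>Direct sum of interval modules k_{B \<beta>}, \<beta> \<in> R, realised inside the
  finitely supported functions 'b \<Rightarrow> 'k.\<close>
definition fun_scale :: "'k::field \<Rightarrow> ('b \<Rightarrow> 'k) \<Rightarrow> ('b \<Rightarrow> 'k)" where
  "fun_scale c v = (\<lambda>\<beta>. c * v \<beta>)"

definition bsum_space :: "'b set \<Rightarrow> ('b \<Rightarrow> 't set) \<Rightarrow> 't \<Rightarrow> ('b \<Rightarrow> 'k::field) set" where
  "bsum_space R B t = {v. finite {\<beta>. v \<beta> \<noteq> 0} \<and> (\<forall>\<beta>. v \<beta> \<noteq> 0 \<longrightarrow> \<beta> \<in> R \<and> t \<in> B \<beta>)}"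

definition bsum_map :: "('b \<Rightarrow> 't set) \<Rightarrow> 't \<Rightarrow> 't \<Rightarrow> ('b \<Rightarrow> 'k::field) \<Rightarrow> ('b \<Rightarrow> 'k)" where
  "bsum_map B s t v = (\<lambda>\<beta>. if t \<in> B \<beta> then v \<beta> else 0)"

definition barcode_of :: "('k::field \<Rightarrow> 'v::ab_group_add \<Rightarrow> 'v) \<Rightarrow> ('t::linorder \<Rightarrow> 'v set)
    \<Rightarrow> ('t \<Rightarrow> 't \<Rightarrow> 'v \<Rightarrow> 'v) \<Rightarrow> 'b set \<Rightarrow> ('b \<Rightarrow> 't set) \<Rightarrow> bool" where
  "barcode_of sc Sp Mp R B \<longleftrightarrow> is_barcode R B \<and>
     (\<exists>\<Phi>. piso sc Sp Mp fun_scale (bsum_space R B) (bsum_map B) \<Phi>)"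

definition is_matching :: "('a \<times> 'b) set \<Rightarrow> 'a set \<Rightarrow> 'b set \<Rightarrow> bool" where
  "is_matching M RA RB \<longleftrightarrow> M \<subseteq> RA \<times> RB \<and>
     (\<forall>a b b'. (a, b) \<in> M \<longrightarrow> (a, b') \<in> M \<longrightarrow> b = b') \<and>
     (\<forall>a a' b. (a, b) \<in> M \<longrightarrow> (a', b) \<in> M \<longrightarrow> a = a')"

definition sub_barcode :: "'a set \<Rightarrow> ('a \<Rightarrow> 't set) \<Rightarrow> 'b set \<Rightarrow> ('b \<Rightarrow> 't set) \<Rightarrow> bool" where
  "sub_barcode RA A RB B \<longleftrightarrow>
     (\<exists>M. is_matching M RA RB \<and> (\<forall>\<alpha>\<in>RA. \<exists>\<beta>. (\<alpha>, \<beta>) \<in> M) \<and>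
          (\<forall>(\<alpha>, \<beta>)\<in>M. A \<alpha> \<subseteq> B \<beta>))"

end

theory Submission
  imports Defs "HOL-Library.Product_Lexorder"
begin

text \<open>The rank \<open>r a b = dim (im (V\<^sub>a \<rightarrow> V\<^sub>b))\<close> of a module with barcode \<open>\<B>\<close> counts the bars
  containing both \<open>a\<close> and \<open>b\<close>. For a chain of pairs \<open>(a\<^sub>1,b\<^sub>1) \<le> \<dots> \<le> (a\<^sub>n,b\<^sub>n)\<close>,
  inclusion-exclusion over intervals writes the number of bars containing some pair of the chain
  as an alternating sum of ranks. This sum can only decrease when passing to a submodule, since
  ranks then drop less along the second index, and when passing to an image of the module,
  since ranks then grow less along the first index. Now \<open>im G\<close> is a submodule of
  \<open>\<phi>\<^sub>2(im F)\<close>, which is an image of \<open>im F\<close>, so every chain is met by at most as many bars of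
  \<open>\<B>\<^sub>G\<close> as of \<open>\<B>\<^sub>F\<close>. Choosing for each bar of \<open>\<B>\<^sub>G\<close> two points whose presence in a bar of
  \<open>\<B>\<^sub>F\<close> forces containment turns this into Hall's condition for the relation \<open>I \<subseteq> J\<close>
  between bars, and Hall's theorem for families with finite neighbourhoods yields the matching.\<close>

section \<open>Linear maps on subspaces\<close>

context vector_space
begin

lemma dim_subset_finite_span:
  assumes "B \<subseteq> A" "A \<subseteq> span F" "finite F"
  shows "dim B \<le> dim A"
proof -
  obtain Ba where Ba: "Ba \<subseteq> A" "independent Ba" "A \<subseteq> span Ba" "card Ba = dim A"
    using basis_exists by blast
  have "finite Ba" using independent_span_bound[OF assms(3) Ba(2)] Ba(1) assms(2) by auto
  then show ?thesis using dim_le_card[of B Ba] assms(1) Ba(3,4) by auto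
qed

lemma span_Int_span_eq_zero:
  assumes ind: "independent (K \<union> C)" and fin: "finite (K \<union> C)" and disj: "K \<inter> C = {}"
  shows "span K \<inter> span C = {0}"
proof -
  have "x = 0" if xK: "x \<in> span K" and xC: "x \<in> span C" for x
  proof -
    have fK: "finite K" and fC: "finite C" using fin by auto
    obtain u where u: "x = (\<Sum>v\<in>K. u v *s v)" using xK span_finite[OF fK] by auto
    obtain w where w: "x = (\<Sum>v\<in>C. w v *s v)" using xC span_finite[OF fC] by auto
    define c where "c v = (if v \<in> K then u v else - w v)" for v
    have "(\<Sum>v\<in>K \<union> C. c v *s v) = (\<Sum>v\<in>K. c v *s v) + (\<Sum>v\<in>C. c v *s v)"
      using fK fC disj by (simp add: sum.union_disjoint)
    also have "(\<Sum>v\<in>K. c v *s v) = x" unfolding u c_def by (rule sum.cong) auto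
    also have "(\<Sum>v\<in>C. c v *s v) = (\<Sum>v\<in>C. - (w v *s v))"
      unfolding c_def using disj by (intro sum.cong) auto
    also have "\<dots> = - x" unfolding w by (simp add: sum_negf)
    finally have "(\<Sum>v\<in>K \<union> C. c v *s v) = 0" by simp
    then have "\<forall>v\<in>K \<union> C. c v = 0" using ind fin dependent_finite by blast
    then have "\<forall>v\<in>K. c v = 0" by blast
    then have "\<forall>v\<in>K. u v = 0" by (simp add: c_def)
    then show ?thesis unfolding u by simp
  qed
  then show ?thesis using span_zero by blast
qed

end

lemma lin_on_subset: "lin_on s1 s2 A f \<Longrightarrow> B \<subseteq> A \<Longrightarrow> lin_on s1 s2 B f"
  unfolding lin_on_def by blast

context vector_space_pair
begin

lemma lin_on_zero:
  assumes "vs1.subspace A" "lin_on s1 s2 A f"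
  shows "f 0 = 0"
proof -
  have "0 \<in> A" using assms(1) vs1.subspace_0 by blast
  then have "f (0 + 0) = f 0 + f 0" using assms(2) unfolding lin_on_def by blast
  then show ?thesis by simp
qed

lemma lin_on_extend:
  assumes A: "vs1.subspace A" and f: "lin_on s1 s2 A f"
  obtains g where "Vector_Spaces.linear s1 s2 g" "\<And>x. x \<in> A \<Longrightarrow> g x = f x"
proof -
  obtain Bs where Bs: "Bs \<subseteq> A" "vs1.independent Bs" "A \<subseteq> vs1.span Bs"
    using vs1.maximal_independent_subset[of A] by blast
  define g where "g = construct Bs f"
  have lg: "Vector_Spaces.linear s1 s2 g" unfolding g_def using linear_construct[OF Bs(2)] .
  interpret lg: Vector_Spaces.linear s1 s2 g by (rule lg)
  have gb: "g b = f b" if "b \<in> Bs" for b unfolding g_def using construct_basis[OF Bs(2) that] .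
  have subsp: "vs1.subspace {x\<in>A. g x = f x}"
  proof (rule vs1.subspaceI)
    show "0 \<in> {x\<in>A. g x = f x}" using lin_on_zero[OF A f] A vs1.subspace_0 by simp
  next
    fix x y assume "x \<in> {x\<in>A. g x = f x}" "y \<in> {x\<in>A. g x = f x}"
    then show "x + y \<in> {x\<in>A. g x = f x}"
      using A f unfolding lin_on_def by (simp add: vs1.subspace_add lg.add)
  next
    fix c x assume "x \<in> {x\<in>A. g x = f x}"
    then show "c *a x \<in> {x\<in>A. g x = f x}"
      using A f unfolding lin_on_def by (simp add: vs1.subspace_scale lg.scale)
  qed
  have "Bs \<subseteq> {x\<in>A. g x = f x}" using gb Bs(1) by blast
  from vs1.span_minimal[OF this subsp] have "vs1.span Bs \<subseteq> {x\<in>A. g x = f x}" .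
  with Bs(3) have "g x = f x" if "x \<in> A" for x using that by blast
  with lg show ?thesis by (rule that)
qed

lemma lin_on_image_subspace:
  assumes A: "vs1.subspace A" and f: "lin_on s1 s2 A f"
  shows "vs2.subspace (f ` A)"
proof -
  obtain g where g: "Vector_Spaces.linear s1 s2 g" "\<And>x. x \<in> A \<Longrightarrow> g x = f x"
    using lin_on_extend[OF A f] by blast
  interpret g: Vector_Spaces.linear s1 s2 g by (rule g(1))
  have "f ` A = g ` A" using g(2) by (intro image_cong) auto
  then show ?thesis using g.subspace_image[OF A] by simp
qed

lemma lin_on_span_image:
  assumes A: "vs1.subspace A" and f: "lin_on s1 s2 A f" and BA: "B \<subseteq> A"
  shows "f ` vs1.span B = vs2.span (f ` B)"
proof -
  obtain g where g: "Vector_Spaces.linear s1 s2 g" "\<And>x. x \<in> A \<Longrightarrow> g x = f x"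
    using lin_on_extend[OF A f] by blast
  interpret g: Vector_Spaces.linear s1 s2 g by (rule g(1))
  have "vs1.span B \<subseteq> A" using vs1.span_minimal[OF BA A] .
  then have "f ` vs1.span B = g ` vs1.span B" using g(2) by (intro image_cong) auto
  also have "\<dots> = vs2.span (g ` B)" using g.span_image by simp
  also have "g ` B = f ` B" using g(2) BA by (intro image_cong) auto
  finally show ?thesis .
qed

lemma linear_rank_nullity_on:
  assumes A: "vs1.subspace A" and F: "finite F" "A \<subseteq> vs1.span F"
    and g: "Vector_Spaces.linear s1 s2 g"
  shows "vs1.dim A = vs2.dim (g ` A) + vs1.dim {x\<in>A. g x = 0}"
proof -
  interpret g: Vector_Spaces.linear s1 s2 g by (rule g)
  define Ker where "Ker = {x\<in>A. g x = 0}"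
  obtain K where K: "K \<subseteq> Ker" "vs1.independent K" "Ker \<subseteq> vs1.span K" "card K = vs1.dim Ker"
    using vs1.basis_exists by blast
  obtain Bs where Bs: "K \<subseteq> Bs" "Bs \<subseteq> A" "vs1.independent Bs" "A \<subseteq> vs1.span Bs"
    using vs1.maximal_independent_subset_extend[of K A] K unfolding Ker_def by blast
  have fBs: "finite Bs" using vs1.independent_span_bound[OF F(1) Bs(3)] Bs(2) F(2) by auto
  have dA: "vs1.dim A = card Bs" using vs1.basis_card_eq_dim[OF Bs(2) Bs(4) Bs(3)] by simp
  define C where "C = Bs - K"
  have KC: "K \<union> C = Bs" "K \<inter> C = {}" unfolding C_def using Bs(1) by auto
  have cBs: "card Bs = card K + card C" using KC fBs card_Un_disjoint[of K C] by auto
  have spBs: "vs1.span Bs = A" using vs1.span_subspace[OF Bs(2) Bs(4) A] .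
  have spC: "vs1.span C \<subseteq> A" unfolding C_def using vs1.span_mono[of "Bs - K" Bs] spBs by auto
  have inj: "inj_on g (vs1.span C)"
    unfolding g.inj_on_iff_eq_0[OF vs1.subspace_span]
  proof (intro ballI impI)
    fix x assume xC: "x \<in> vs1.span C" and "g x = 0"
    then have "x \<in> vs1.span K" using spC K(3) unfolding Ker_def by auto
    then show "x = 0" using vs1.span_Int_span_eq_zero[of K C] KC Bs(3) fBs xC by auto
  qed
  have indC: "vs1.independent C" unfolding C_def using vs1.independent_mono[OF Bs(3)] by auto
  have "g ` A = vs2.span (g ` Bs)" using g.span_image[of Bs] spBs by simp
  also have "\<dots> = vs2.span (g ` C)"
    unfolding vs2.span_eq
  proof
    have "g ` K \<subseteq> vs2.span (g ` C)" using K(1) vs2.span_zero unfolding Ker_def by auto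
    moreover have "g ` Bs = g ` K \<union> g ` C" using KC(1) by auto
    ultimately show "g ` Bs \<subseteq> vs2.span (g ` C)" using vs2.span_superset by auto
    show "g ` C \<subseteq> vs2.span (g ` Bs)" unfolding C_def by (auto intro: vs2.span_base)
  qed
  finally have "vs2.dim (g ` A) = card C"
    using vs2.dim_span_eq_card_independent[OF g.independent_injective_image[OF indC inj]]
      card_image[OF inj_on_subset[OF inj vs1.span_superset]] by simp
  then show ?thesis using dA cBs K(4) unfolding Ker_def by simp
qed

lemma lin_on_rank_nullity:
  assumes A: "vs1.subspace A" and F: "finite F" "A \<subseteq> vs1.span F" and h: "lin_on s1 s2 A h"
  shows "vs1.dim A = vs2.dim (h ` A) + vs1.dim {x\<in>A. h x = 0}"
proof -
  obtain g where g: "Vector_Spaces.linear s1 s2 g" "\<And>x. x \<in> A \<Longrightarrow> g x = h x"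
    using lin_on_extend[OF A h] by blast
  have "h ` A = g ` A" using g(2) by (intro image_cong) auto
  moreover have "{x\<in>A. h x = 0} = {x\<in>A. g x = 0}" using g(2) by auto
  ultimately show ?thesis using linear_rank_nullity_on[OF A F g(1)] by simp
qed

text \<open>Rearranged: the nullity of \<open>h\<close> on \<open>B\<close> is at most its nullity on \<open>A\<close>.\<close>

lemma lin_on_nullity_mono:
  assumes A: "vs1.subspace A" and F: "finite F" "A \<subseteq> vs1.span F"
    and B: "vs1.subspace B" "B \<subseteq> A" and h: "lin_on s1 s2 A h"
  shows "vs1.dim B + vs2.dim (h ` A) \<le> vs1.dim A + vs2.dim (h ` B)"
proof -
  have "vs1.dim B = vs2.dim (h ` B) + vs1.dim {x\<in>B. h x = 0}"
    using lin_on_rank_nullity[OF B(1) F(1) _ lin_on_subset[OF h B(2)]] B(2) F(2) by auto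
  moreover have "vs1.dim {x\<in>B. h x = 0} \<le> vs1.dim {x\<in>A. h x = 0}"
    by (rule vs1.dim_subset_finite_span[OF _ _ F(1)]) (use B(2) F(2) in auto)
  ultimately show ?thesis using lin_on_rank_nullity[OF A F h] by linarith
qed

lemma lin_on_dim_image_le:
  assumes "vs1.subspace A" "finite F" "A \<subseteq> vs1.span F" "lin_on s1 s2 A h"
  shows "vs2.dim (h ` A) \<le> vs1.dim A"
  using lin_on_rank_nullity[OF assms] by simp

lemma lin_on_inj_dim_image:
  assumes A: "vs1.subspace A" and F: "finite F" "A \<subseteq> vs1.span F"
    and h: "lin_on s1 s2 A h" and inj: "inj_on h A"
  shows "vs2.dim (h ` A) = vs1.dim A"
proof -
  have "0 \<in> A" using A vs1.subspace_0 by blast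
  then have "{x\<in>A. h x = 0} = {0}"
    using lin_on_zero[OF A h] inj unfolding inj_on_def by auto
  moreover have "vs1.dim {0} = 0"
    using vs1.dim_span[of "{}"] vs1.dim_eq_card_independent[OF vs1.independent_empty] by simp
  ultimately show ?thesis using lin_on_rank_nullity[OF A F h] by simp
qed

end

section \<open>Finitely supported functions\<close>

lemma sum_fun_apply: "(\<Sum>x\<in>S. f x) y = (\<Sum>x\<in>S. f x y)"
  by (induction S rule: infinite_finite_induct) auto

lemma vector_space_fun_scale: "vector_space (fun_scale :: 'k::field \<Rightarrow> ('b \<Rightarrow> 'k) \<Rightarrow> ('b \<Rightarrow> 'k))"
  unfolding vector_space_def fun_scale_def by (simp add: fun_eq_iff algebra_simps)

definition unit_fun :: "'b \<Rightarrow> 'b \<Rightarrow> 'k::field" where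
  "unit_fun \<beta> = (\<lambda>\<gamma>. if \<gamma> = \<beta> then 1 else 0)"

definition finsupp_on :: "'b set \<Rightarrow> ('b \<Rightarrow> 'k::field) set" where
  "finsupp_on E = {v. finite {\<beta>. v \<beta> \<noteq> 0} \<and> (\<forall>\<beta>. v \<beta> \<noteq> 0 \<longrightarrow> \<beta> \<in> E)}"

lemma inj_unit_fun: "inj (unit_fun :: 'b \<Rightarrow> 'b \<Rightarrow> 'k::field)"
  by (rule injI) (metis unit_fun_def zero_neq_one)

lemma sum_scale_unit_fun_apply:
  assumes "finite S" "\<beta> \<in> S"
  shows "(\<Sum>\<gamma>\<in>S. fun_scale (u \<gamma>) (unit_fun \<gamma> :: 'b \<Rightarrow> 'k::field)) \<beta> = u \<beta>"
proof -
  have "(\<Sum>\<gamma>\<in>S. fun_scale (u \<gamma>) (unit_fun \<gamma> :: 'b \<Rightarrow> 'k)) \<beta> = (\<Sum>\<gamma>\<in>S. if \<gamma> = \<beta> then u \<gamma> else 0)"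
    unfolding sum_fun_apply fun_scale_def unit_fun_def by (intro sum.cong) auto
  also have "\<dots> = u \<beta>" using assms by (simp add: sum.delta')
  finally show ?thesis .
qed

lemma independent_unit_fun:
  "module.independent fun_scale ((unit_fun :: 'b \<Rightarrow> 'b \<Rightarrow> 'k::field) ` E)"
proof -
  interpret vector_space "fun_scale :: 'k \<Rightarrow> ('b \<Rightarrow> 'k) \<Rightarrow> ('b \<Rightarrow> 'k)" by (rule vector_space_fun_scale)
  show ?thesis
    unfolding independent_explicit_finite_subsets
  proof (intro allI impI ballI)
    fix S u v assume S: "S \<subseteq> unit_fun ` E" "finite S"
      and sum0: "(\<Sum>v\<in>S. fun_scale (u v) v) = (0 :: 'b \<Rightarrow> 'k)" and vS: "v \<in> S"
    obtain T where T: "T \<subseteq> E" "S = unit_fun ` T" using S(1) subset_image_iff by metis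
    have injT: "inj_on (unit_fun :: 'b \<Rightarrow> 'b \<Rightarrow> 'k) T" using inj_unit_fun by (rule inj_on_subset) simp
    have fT: "finite T" using S(2) T(2) finite_imageD[OF _ injT] by simp
    obtain \<beta> where \<beta>: "\<beta> \<in> T" "v = unit_fun \<beta>" using vS T(2) by auto
    have "(\<Sum>v\<in>S. fun_scale (u v) v) = (\<Sum>\<gamma>\<in>T. fun_scale (u (unit_fun \<gamma>)) (unit_fun \<gamma> :: 'b \<Rightarrow> 'k))"
      unfolding T(2) using sum.reindex[OF injT] by simp
    then have "(\<Sum>\<gamma>\<in>T. fun_scale (u (unit_fun \<gamma>)) (unit_fun \<gamma> :: 'b \<Rightarrow> 'k)) = 0"
      using sum0 by simp
    then show "u v = 0" using sum_scale_unit_fun_apply[OF fT \<beta>(1), of "\<lambda>\<gamma>. u (unit_fun \<gamma>)"] \<beta>(2) by simp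
  qed
qed

lemma subspace_finsupp_on: "module.subspace fun_scale (finsupp_on E :: ('b \<Rightarrow> 'k::field) set)"
proof -
  interpret vector_space "fun_scale :: 'k \<Rightarrow> ('b \<Rightarrow> 'k) \<Rightarrow> ('b \<Rightarrow> 'k)" by (rule vector_space_fun_scale)
  show ?thesis
  proof (rule subspaceI)
    show "0 \<in> finsupp_on E" unfolding finsupp_on_def by simp
  next
    fix x y :: "'b \<Rightarrow> 'k" assume "x \<in> finsupp_on E" "y \<in> finsupp_on E"
    moreover have "{\<beta>. (x + y) \<beta> \<noteq> 0} \<subseteq> {\<beta>. x \<beta> \<noteq> 0} \<union> {\<beta>. y \<beta> \<noteq> 0}" by auto
    ultimately show "x + y \<in> finsupp_on E" unfolding finsupp_on_def by (auto intro: finite_subset)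
  next
    fix c and x :: "'b \<Rightarrow> 'k" assume "x \<in> finsupp_on E"
    moreover have "{\<beta>. fun_scale c x \<beta> \<noteq> 0} \<subseteq> {\<beta>. x \<beta> \<noteq> 0}" unfolding fun_scale_def by auto
    ultimately show "fun_scale c x \<in> finsupp_on E"
      unfolding finsupp_on_def fun_scale_def by (auto intro: finite_subset)
  qed
qed

lemma span_unit_fun:
  assumes fE: "finite E"
  shows "module.span fun_scale ((unit_fun :: 'b \<Rightarrow> 'b \<Rightarrow> 'k::field) ` E) = finsupp_on E"
proof -
  interpret vector_space "fun_scale :: 'k \<Rightarrow> ('b \<Rightarrow> 'k) \<Rightarrow> ('b \<Rightarrow> 'k)" by (rule vector_space_fun_scale)
  show ?thesis
  proof
    have "unit_fun ` E \<subseteq> finsupp_on E" unfolding finsupp_on_def unit_fun_def by (auto split: if_splits)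
    then show "span (unit_fun ` E) \<subseteq> finsupp_on E" by (rule span_minimal[OF _ subspace_finsupp_on])
  next
    show "finsupp_on E \<subseteq> span (unit_fun ` E)"
    proof
      fix v :: "'b \<Rightarrow> 'k" assume v: "v \<in> finsupp_on E"
      have "v = (\<Sum>\<gamma>\<in>E. fun_scale (v \<gamma>) (unit_fun \<gamma>))"
      proof
        fix \<beta>
        show "v \<beta> = (\<Sum>\<gamma>\<in>E. fun_scale (v \<gamma>) (unit_fun \<gamma>)) \<beta>"
        proof (cases "\<beta> \<in> E")
          case True
          then show ?thesis using sum_scale_unit_fun_apply[OF fE True, of v] by simp
        next
          case False
          then have "(\<Sum>\<gamma>\<in>E. fun_scale (v \<gamma>) (unit_fun \<gamma> :: 'b \<Rightarrow> 'k)) \<beta> = 0"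
            unfolding sum_fun_apply fun_scale_def unit_fun_def by (intro sum.neutral) auto
          moreover have "v \<beta> = 0" using v False unfolding finsupp_on_def by auto
          ultimately show ?thesis by simp
        qed
      qed
      also have "\<dots> \<in> span (unit_fun ` E)"
        by (rule span_sum) (auto intro: span_scale span_base)
      finally show "v \<in> span (unit_fun ` E)" .
    qed
  qed
qed

lemma dim_finsupp_on:
  assumes "finite E"
  shows "vector_space.dim fun_scale (finsupp_on E :: ('b \<Rightarrow> 'k::field) set) = card E"
proof -
  interpret vector_space "fun_scale :: 'k \<Rightarrow> ('b \<Rightarrow> 'k) \<Rightarrow> ('b \<Rightarrow> 'k)" by (rule vector_space_fun_scale)
  have "dim (finsupp_on E :: ('b \<Rightarrow> 'k) set) = card ((unit_fun :: 'b \<Rightarrow> 'b \<Rightarrow> 'k) ` E)"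
    unfolding span_unit_fun[OF assms, symmetric] using dim_span_eq_card_independent[OF independent_unit_fun] .
  also have "\<dots> = card E" using inj_unit_fun by (intro card_image) (rule inj_on_subset, auto)
  finally show ?thesis .
qed

lemma bsum_space_eq_finsupp_on: "bsum_space R B t = finsupp_on {\<beta>\<in>R. t \<in> B \<beta>}"
  unfolding bsum_space_def finsupp_on_def by auto

lemma bsum_map_image:
  "bsum_map B a b ` bsum_space R B a =
    (finsupp_on {\<beta>\<in>R. a \<in> B \<beta> \<and> b \<in> B \<beta>} :: ('b \<Rightarrow> 'k::field) set)"
proof
  show "bsum_map B a b ` bsum_space R B a \<subseteq> finsupp_on {\<beta>\<in>R. a \<in> B \<beta> \<and> b \<in> B \<beta>}"
  proof
    fix w assume "w \<in> bsum_map B a b ` bsum_space R B a"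
    then obtain v where v: "v \<in> bsum_space R B a" "w = bsum_map B a b v" by auto
    have "{\<beta>. w \<beta> \<noteq> 0} \<subseteq> {\<beta>. v \<beta> \<noteq> 0}" unfolding v(2) bsum_map_def by auto
    then show "w \<in> finsupp_on {\<beta>\<in>R. a \<in> B \<beta> \<and> b \<in> B \<beta>}"
      using v unfolding finsupp_on_def bsum_space_def bsum_map_def by (auto intro: finite_subset)
  qed
  show "finsupp_on {\<beta>\<in>R. a \<in> B \<beta> \<and> b \<in> B \<beta>} \<subseteq> bsum_map B a b ` bsum_space R B a"
  proof
    fix w assume w: "w \<in> finsupp_on {\<beta>\<in>R. a \<in> B \<beta> \<and> b \<in> B \<beta>}"
    then have "w \<in> bsum_space R B a" unfolding finsupp_on_def bsum_space_def by auto
    moreover have "bsum_map B a b w = w" using w unfolding finsupp_on_def bsum_map_def by (auto simp: fun_eq_iff)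
    ultimately show "w \<in> bsum_map B a b ` bsum_space R B a" by (metis image_eqI)
  qed
qed

section \<open>Persistence modules and their rank functions\<close>

lemma pmodD:
  assumes "pmod sc Sp Mp"
  shows pmod_vector_space: "vector_space sc"
    and pmod_subspace: "module.subspace sc (Sp t)"
    and pmod_lin_on: "s \<le> t \<Longrightarrow> lin_on sc sc (Sp s) (Mp s t)"
    and pmod_maps_into: "s \<le> t \<Longrightarrow> Mp s t ` Sp s \<subseteq> Sp t"
    and pmod_id: "x \<in> Sp t \<Longrightarrow> Mp t t x = x"
    and pmod_comp: "r \<le> s \<Longrightarrow> s \<le> t \<Longrightarrow> x \<in> Sp r \<Longrightarrow> Mp r t x = Mp s t (Mp r s x)"
  using assms unfolding pmod_def by metis+

lemma pmod_comp_image: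
  assumes "pmod sc Sp Mp" "r \<le> s" "s \<le> t" "X \<subseteq> Sp r"
  shows "Mp s t ` Mp r s ` X = Mp r t ` X"
  unfolding image_image using pmod_comp[OF assms(1-3)] assms(4) by (intro image_cong) auto

lemma pmod_image_subspace:
  assumes "pmod sc Sp Mp" "s \<le> t"
  shows "module.subspace sc (Mp s t ` Sp s)"
proof -
  interpret vector_space_pair sc sc
    unfolding vector_space_pair_def using pmod_vector_space[OF assms(1)] by blast
  show ?thesis
    using lin_on_image_subspace[OF pmod_subspace[OF assms(1)] pmod_lin_on[OF assms]] .
qed

lemma phomD:
  assumes "phom sc1 Sp1 Mp1 sc2 Sp2 Mp2 F"
  shows phom_lin_on: "lin_on sc1 sc2 (Sp1 t) (F t)"
    and phom_maps_into: "F t ` Sp1 t \<subseteq> Sp2 t"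
    and phom_natural: "s \<le> t \<Longrightarrow> x \<in> Sp1 s \<Longrightarrow> F t (Mp1 s t x) = Mp2 s t (F s x)"
  using assms unfolding phom_def by metis+

lemma phom_restrict:
  assumes "phom sc1 Sp1 Mp1 sc2 Sp2 Mp2 F" "\<And>t. Sp1' t \<subseteq> Sp1 t"
  shows "phom sc1 Sp1' Mp1 sc2 Sp2 Mp2 F"
  unfolding phom_def
proof (intro conjI allI impI ballI)
  show "lin_on sc1 sc2 (Sp1' t) (F t)" for t using lin_on_subset[OF phom_lin_on[OF assms(1)] assms(2)] .
  show "F t ` Sp1' t \<subseteq> Sp2 t" for t using phom_maps_into[OF assms(1)] assms(2) by blast
  show "F t (Mp1 s t x) = Mp2 s t (F s x)" if "s \<le> t" "x \<in> Sp1' s" for s t x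
    using phom_natural[OF assms(1) that(1)] that(2) assms(2) by blast
qed

lemma pfdE:
  assumes "pfd sc Sp"
  obtains B where "finite B" "B \<subseteq> Sp t" "module.span sc B = Sp t"
  using assms unfolding pfd_def by blast

lemma im_space_subset: "phom sc1 Sp1 Mp1 sc2 Sp2 Mp2 F \<Longrightarrow> im_space Sp1 F t \<subseteq> Sp2 t"
  unfolding im_space_def by (rule phom_maps_into)

lemma im_space_factorization_subset:
  assumes "phom sc1 Sp1 Mp1 sc2 Sp2 Mp2 \<phi>" "\<forall>t. \<forall>x\<in>Sp1 t. G t x = \<psi> t (F t (\<phi> t x))"
  shows "im_space Sp1 G t \<subseteq> im_space (im_space Sp2 F) \<psi> t"
  using assms(2) phom_maps_into[OF assms(1)] unfolding im_space_def by blast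

lemma im_space_structure_map:
  assumes "phom sc1 Sp1 Mp1 sc2 Sp2 Mp2 F" "s \<le> t"
  shows "Mp2 s t ` im_space Sp1 F s = F t ` Mp1 s t ` Sp1 s"
  unfolding im_space_def image_image using phom_natural[OF assms] by (intro image_cong) auto

lemma pmod_im_space:
  fixes Sp1 :: "'t::linorder \<Rightarrow> 'v::ab_group_add set"
  assumes S1: "pmod sc1 Sp1 Mp1" and S2: "pmod sc2 Sp2 Mp2" and F: "phom sc1 Sp1 Mp1 sc2 Sp2 Mp2 F"
  shows "pmod sc2 (im_space Sp1 F) Mp2"
proof -
  interpret vector_space_pair sc1 sc2
    unfolding vector_space_pair_def using pmod_vector_space[OF S1] pmod_vector_space[OF S2] by (rule conjI)
  note im = im_space_subset[OF F]
  show ?thesis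
    unfolding pmod_def
  proof (intro conjI allI impI ballI)
    show "vector_space sc2" by (rule pmod_vector_space[OF S2])
    show "vs2.subspace (im_space Sp1 F t)" for t
      unfolding im_space_def by (rule lin_on_image_subspace[OF pmod_subspace[OF S1] phom_lin_on[OF F]])
    fix s t :: 't assume st: "s \<le> t"
    show "lin_on sc2 sc2 (im_space Sp1 F s) (Mp2 s t)"
      using lin_on_subset[OF pmod_lin_on[OF S2 st] im] .
    show "Mp2 s t ` im_space Sp1 F s \<subseteq> im_space Sp1 F t"
      unfolding im_space_structure_map[OF F st] unfolding im_space_def
      using pmod_maps_into[OF S1 st] by blast
  next
    show "Mp2 t t x = x" if "x \<in> im_space Sp1 F t" for t x
      using pmod_id[OF S2] that im by blast
  next
    show "Mp2 r t x = Mp2 s t (Mp2 r s x)" if "r \<le> s" "s \<le> t" "x \<in> im_space Sp1 F r" for r s t x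
      using pmod_comp[OF S2 that(1,2)] that(3) im by blast
  qed
qed

lemma pfd_im_space:
  assumes S1: "pmod sc1 Sp1 Mp1" "pfd sc1 Sp1" and S2: "pmod sc2 Sp2 Mp2"
    and F: "phom sc1 Sp1 Mp1 sc2 Sp2 Mp2 F"
  shows "pfd sc2 (im_space Sp1 F)"
  unfolding pfd_def
proof
  fix t
  interpret vector_space_pair sc1 sc2
    unfolding vector_space_pair_def using pmod_vector_space[OF S1(1)] pmod_vector_space[OF S2] by (rule conjI)
  obtain B where B: "finite B" "B \<subseteq> Sp1 t" "vs1.span B = Sp1 t" using pfdE[OF S1(2)] .
  have "vs2.span (F t ` B) = im_space Sp1 F t"
    unfolding im_space_def using lin_on_span_image[OF pmod_subspace[OF S1(1)] phom_lin_on[OF F] B(2)] B(3)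
    by simp
  moreover have "F t ` B \<subseteq> im_space Sp1 F t" unfolding im_space_def using B(2) by blast
  ultimately show "\<exists>B'. finite B' \<and> B' \<subseteq> im_space Sp1 F t \<and> vs2.span B' = im_space Sp1 F t"
    using B(1) by blast
qed

definition pmod_rank :: "('k::field \<Rightarrow> 'v::ab_group_add \<Rightarrow> 'v) \<Rightarrow> ('t \<Rightarrow> 'v set)
    \<Rightarrow> ('t \<Rightarrow> 't \<Rightarrow> 'v \<Rightarrow> 'v) \<Rightarrow> 't \<Rightarrow> 't \<Rightarrow> int" where
  "pmod_rank sc Sp Mp s t = int (vector_space.dim sc (Mp s t ` Sp s))"

lemma pmod_rank_submodule_le:
  assumes S: "pmod sc Sp Mp" "pfd sc Sp" and S': "\<And>t. Sp' t \<subseteq> Sp t" and "s \<le> t"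
  shows "pmod_rank sc Sp' Mp s t \<le> pmod_rank sc Sp Mp s t"
proof -
  interpret vector_space sc by (rule pmod_vector_space[OF S(1)])
  obtain B where B: "finite B" "span B = Sp t" using pfdE[OF S(2)] by metis
  have "dim (Mp s t ` Sp' s) \<le> dim (Mp s t ` Sp s)"
  proof (rule dim_subset_finite_span[OF _ _ B(1)])
    show "Mp s t ` Sp' s \<subseteq> Mp s t ` Sp s" using S' by (rule image_mono)
    show "Mp s t ` Sp s \<subseteq> span B" using pmod_maps_into[OF S(1) \<open>s \<le> t\<close>] B(2) by simp
  qed
  then show ?thesis unfolding pmod_rank_def by simp
qed

lemma pmod_rank_submodule_diff_le:
  assumes S: "pmod sc Sp Mp" "pfd sc Sp"
    and S': "\<And>t. module.subspace sc (Sp' t)" "\<And>t. Sp' t \<subseteq> Sp t"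
    and st: "s \<le> t" "t \<le> u"
  shows "pmod_rank sc Sp' Mp s t - pmod_rank sc Sp' Mp s u \<le> pmod_rank sc Sp Mp s t - pmod_rank sc Sp Mp s u"
proof -
  interpret vector_space_pair sc sc
    unfolding vector_space_pair_def using pmod_vector_space[OF S(1)] by blast
  obtain B where B: "finite B" "vs1.span B = Sp t" using pfdE[OF S(2)] by metis
  let ?A = "Mp s t ` Sp s" and ?A' = "Mp s t ` Sp' s"
  have A: "vs1.subspace ?A" "?A \<subseteq> Sp t"
    using pmod_image_subspace[OF S(1) st(1)] pmod_maps_into[OF S(1) st(1)] by auto
  have A': "vs1.subspace ?A'" "?A' \<subseteq> ?A"
    using lin_on_image_subspace[OF S'(1) lin_on_subset[OF pmod_lin_on[OF S(1) st(1)] S'(2)]] S'(2)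
    by auto
  have "?A \<subseteq> vs1.span B" using A(2) B(2) by simp
  from lin_on_nullity_mono[OF A(1) B(1) this A' lin_on_subset[OF pmod_lin_on[OF S(1) st(2)] A(2)]]
  have "vs1.dim ?A' + vs1.dim (Mp t u ` ?A) \<le> vs1.dim ?A + vs1.dim (Mp t u ` ?A')" .
  moreover have "Mp t u ` ?A = Mp s u ` Sp s" "Mp t u ` ?A' = Mp s u ` Sp' s"
    using pmod_comp_image[OF S(1) st] S'(2) by auto
  ultimately show ?thesis unfolding pmod_rank_def by simp
qed

lemma pmod_rank_im_space_le:
  assumes S1: "pmod sc1 Sp1 Mp1" "pfd sc1 Sp1" and S2: "pmod sc2 Sp2 Mp2"
    and F: "phom sc1 Sp1 Mp1 sc2 Sp2 Mp2 F" and st: "s \<le> t"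
  shows "pmod_rank sc2 (im_space Sp1 F) Mp2 s t \<le> pmod_rank sc1 Sp1 Mp1 s t"
proof -
  interpret vector_space_pair sc1 sc2
    unfolding vector_space_pair_def using pmod_vector_space[OF S1(1)] pmod_vector_space[OF S2] by (rule conjI)
  obtain B where B: "finite B" "vs1.span B = Sp1 t" using pfdE[OF S1(2)] by metis
  let ?A = "Mp1 s t ` Sp1 s"
  have A: "vs1.subspace ?A" "?A \<subseteq> Sp1 t"
    using pmod_image_subspace[OF S1(1) st] pmod_maps_into[OF S1(1) st] by auto
  have "?A \<subseteq> vs1.span B" using A(2) B(2) by simp
  from lin_on_dim_image_le[OF A(1) B(1) this lin_on_subset[OF phom_lin_on[OF F] A(2)]]
  have "vs2.dim (F t ` ?A) \<le> vs1.dim ?A" .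
  then show ?thesis unfolding pmod_rank_def im_space_structure_map[OF F st] by simp
qed

lemma pmod_rank_im_space_diff_le:
  assumes S1: "pmod sc1 Sp1 Mp1" "pfd sc1 Sp1" and S2: "pmod sc2 Sp2 Mp2"
    and F: "phom sc1 Sp1 Mp1 sc2 Sp2 Mp2 F" and st: "r \<le> s" "s \<le> t"
  shows "pmod_rank sc2 (im_space Sp1 F) Mp2 s t - pmod_rank sc2 (im_space Sp1 F) Mp2 r t
    \<le> pmod_rank sc1 Sp1 Mp1 s t - pmod_rank sc1 Sp1 Mp1 r t"
proof -
  interpret vector_space_pair sc1 sc2
    unfolding vector_space_pair_def using pmod_vector_space[OF S1(1)] pmod_vector_space[OF S2] by (rule conjI)
  obtain B where B: "finite B" "vs1.span B = Sp1 t" using pfdE[OF S1(2)] by metis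
  let ?A = "Mp1 s t ` Sp1 s" and ?A' = "Mp1 r t ` Sp1 r"
  have A: "vs1.subspace ?A" "?A \<subseteq> Sp1 t"
    using pmod_image_subspace[OF S1(1) st(2)] pmod_maps_into[OF S1(1) st(2)] by auto
  have "?A' = Mp1 s t ` Mp1 r s ` Sp1 r"
    using pmod_comp_image[OF S1(1) st] by simp
  then have A': "vs1.subspace ?A'" "?A' \<subseteq> ?A"
    using pmod_image_subspace[OF S1(1) order_trans[OF st]] pmod_maps_into[OF S1(1) st(1)] by auto
  have "?A \<subseteq> vs1.span B" using A(2) B(2) by simp
  from lin_on_nullity_mono[OF A(1) B(1) this A' lin_on_subset[OF phom_lin_on[OF F] A(2)]]
  have "vs1.dim ?A' + vs2.dim (F t ` ?A) \<le> vs1.dim ?A + vs2.dim (F t ` ?A')" .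
  then show ?thesis
    unfolding pmod_rank_def im_space_structure_map[OF F st(2)] im_space_structure_map[OF F order_trans[OF st]]
    by simp
qed

lemma barcode_of_locally_finite:
  fixes sc :: "'k::field \<Rightarrow> 'v::ab_group_add \<Rightarrow> 'v" and R :: "'b set"
  assumes S: "pmod sc Sp Mp" "pfd sc Sp" and bc: "barcode_of sc Sp Mp R B"
  shows "finite {\<beta>\<in>R. t \<in> B \<beta>}"
proof -
  interpret vector_space_pair sc "fun_scale :: 'k \<Rightarrow> ('b \<Rightarrow> 'k) \<Rightarrow> ('b \<Rightarrow> 'k)"
    unfolding vector_space_pair_def using pmod_vector_space[OF S(1)] vector_space_fun_scale by (rule conjI)
  obtain \<Phi> where \<Phi>: "piso sc Sp Mp fun_scale (bsum_space R B) (bsum_map B) \<Phi>"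
    using bc unfolding barcode_of_def by blast
  then have \<Phi>_lin: "lin_on sc fun_scale (Sp t) (\<Phi> t)"
    unfolding piso_def using phom_lin_on by blast
  obtain Bt where Bt: "finite Bt" "Bt \<subseteq> Sp t" "vs1.span Bt = Sp t" using pfdE[OF S(2)] .
  have "bsum_space R B t = \<Phi> t ` Sp t" using \<Phi> unfolding piso_def bij_betw_def by simp
  also have "\<dots> = vs2.span (\<Phi> t ` Bt)"
    using lin_on_span_image[OF pmod_subspace[OF S(1)] \<Phi>_lin Bt(2)] Bt(3) by simp
  finally have "unit_fun ` {\<beta>\<in>R. t \<in> B \<beta>} \<subseteq> vs2.span (\<Phi> t ` Bt)"
    unfolding bsum_space_eq_finsupp_on finsupp_on_def unit_fun_def by (auto split: if_splits)
  then have "finite ((unit_fun :: 'b \<Rightarrow> 'b \<Rightarrow> 'k) ` {\<beta>\<in>R. t \<in> B \<beta>})"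
    using vs2.independent_span_bound[OF finite_imageI[OF Bt(1)] independent_unit_fun] by blast
  then show ?thesis using finite_imageD[OF _ inj_on_subset[OF inj_unit_fun]] by blast
qed

lemma barcode_of_pmod_rank:
  fixes sc :: "'k::field \<Rightarrow> 'v::ab_group_add \<Rightarrow> 'v" and R :: "'b set"
  assumes S: "pmod sc Sp Mp" "pfd sc Sp" and bc: "barcode_of sc Sp Mp R B" and st: "s \<le> t"
  shows "pmod_rank sc Sp Mp s t = int (card {\<beta>\<in>R. s \<in> B \<beta> \<and> t \<in> B \<beta>})"
proof -
  interpret vector_space_pair sc "fun_scale :: 'k \<Rightarrow> ('b \<Rightarrow> 'k) \<Rightarrow> ('b \<Rightarrow> 'k)"
    unfolding vector_space_pair_def using pmod_vector_space[OF S(1)] vector_space_fun_scale by (rule conjI)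
  obtain \<Phi> where \<Phi>: "piso sc Sp Mp fun_scale (bsum_space R B) (bsum_map B) \<Phi>"
    using bc unfolding barcode_of_def by blast
  have \<Phi>_hom: "phom sc Sp Mp fun_scale (bsum_space R B) (bsum_map B) \<Phi>"
    and \<Phi>_bij: "bij_betw (\<Phi> u) (Sp u) (bsum_space R B u)" for u
    using \<Phi> unfolding piso_def by blast+
  obtain Bt where Bt: "finite Bt" "vs1.span Bt = Sp t" using pfdE[OF S(2)] by metis
  let ?A = "Mp s t ` Sp s"
  have A: "vs1.subspace ?A" "?A \<subseteq> Sp t"
    using pmod_image_subspace[OF S(1) st] pmod_maps_into[OF S(1) st] by auto
  have "?A \<subseteq> vs1.span Bt" using A(2) Bt(2) by simp
  from lin_on_inj_dim_image[OF A(1) Bt(1) this lin_on_subset[OF phom_lin_on[OF \<Phi>_hom] A(2)]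
      inj_on_subset[OF bij_betw_imp_inj_on[OF \<Phi>_bij] A(2)]]
  have "vs2.dim (\<Phi> t ` ?A) = vs1.dim ?A" .
  moreover have "\<Phi> t ` ?A = bsum_map B s t ` bsum_space R B s"
    using im_space_structure_map[OF \<Phi>_hom st] \<Phi>_bij[of s]
    unfolding im_space_def bij_betw_def by simp
  moreover have "finite {\<beta>\<in>R. s \<in> B \<beta> \<and> t \<in> B \<beta>}"
    using barcode_of_locally_finite[OF S bc, of s] by (rule rev_finite_subset) auto
  ultimately show ?thesis
    unfolding pmod_rank_def bsum_map_image by (simp add: dim_finsupp_on)
qed

section \<open>Chains of index pairs\<close>

text \<open>For a chain \<open>(a\<^sub>1,b\<^sub>1) \<le> \<dots> \<le> (a\<^sub>n,b\<^sub>n)\<close> this is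
  \<open>\<Sum>\<^sub>i r a\<^sub>i b\<^sub>i - \<Sum>\<^sub>i r a\<^sub>i b\<^sub>i\<^sub>+\<^sub>1\<close>: when \<open>r a b\<close> counts the bars containing \<open>a\<close> and \<open>b\<close>,
  this is the inclusion-exclusion count of the bars containing some pair of the chain.\<close>

fun chain_rank_sum :: "('t \<Rightarrow> 't \<Rightarrow> int) \<Rightarrow> ('t \<times> 't) list \<Rightarrow> int" where
  "chain_rank_sum r [] = 0"
| "chain_rank_sum r [p] = r (fst p) (snd p)"
| "chain_rank_sum r (p # q # ps) = r (fst p) (snd p) - r (fst p) (snd q) + chain_rank_sum r (q # ps)"

definition pair_chain :: "('t::linorder \<times> 't) list \<Rightarrow> bool" where
  "pair_chain ps \<longleftrightarrow>
     sorted_wrt (\<lambda>p q. fst p \<le> fst q \<and> snd p \<le> snd q) ps \<and> (\<forall>p\<in>set ps. fst p \<le> snd p)"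

definition bars_containing :: "'b set \<Rightarrow> ('b \<Rightarrow> 't set) \<Rightarrow> ('t \<times> 't) set \<Rightarrow> 'b set" where
  "bars_containing R B P = {\<beta>\<in>R. \<exists>p\<in>P. fst p \<in> B \<beta> \<and> snd p \<in> B \<beta>}"

lemma pair_chain_ConsD: "pair_chain (p # ps) \<Longrightarrow> pair_chain ps"
  unfolding pair_chain_def by auto

lemma chain_rank_sum_mono_right:
  assumes diff: "\<And>a b b'. a \<le> b \<Longrightarrow> b \<le> b' \<Longrightarrow> r a b - r a b' \<le> r' a b - r' a b'"
    and le: "\<And>a b. a \<le> b \<Longrightarrow> r a b \<le> r' a b"
    and "pair_chain ps"
  shows "chain_rank_sum r ps \<le> chain_rank_sum r' ps"
  using \<open>pair_chain ps\<close>
proof (induction ps rule: induct_list012)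
  case (2 p)
  then show ?case using le unfolding pair_chain_def by auto
next
  case (3 p q ps)
  have "fst p \<le> snd p" "snd p \<le> snd q" using "3.prems" unfolding pair_chain_def by auto
  then show ?case using diff "3.IH"(2)[OF pair_chain_ConsD[OF "3.prems"]] by fastforce
qed simp

lemma chain_rank_sum_mono_left:
  assumes diff: "\<And>a a' b. a' \<le> a \<Longrightarrow> a \<le> b \<Longrightarrow> r a b - r a' b \<le> r' a b - r' a' b"
    and le: "\<And>a b. a \<le> b \<Longrightarrow> r a b \<le> r' a b"
    and "pair_chain ps"
  shows "chain_rank_sum r ps \<le> chain_rank_sum r' ps"
proof -
  \<comment> \<open>regroup the sum as \<open>r a\<^sub>1 b\<^sub>1 + \<Sum>\<^sub>i (r a\<^sub>i\<^sub>+\<^sub>1 b\<^sub>i\<^sub>+\<^sub>1 - r a\<^sub>i b\<^sub>i\<^sub>+\<^sub>1)\<close>\<close>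
  have "chain_rank_sum r (p # ps) - r (fst p) (snd p) \<le> chain_rank_sum r' (p # ps) - r' (fst p) (snd p)"
    if "pair_chain (p # ps)" for p ps
    using that
  proof (induction ps arbitrary: p)
    case (Cons q ps)
    have "fst p \<le> fst q" "fst q \<le> snd q" using Cons.prems unfolding pair_chain_def by auto
    then show ?case using diff Cons.IH[OF pair_chain_ConsD[OF Cons.prems]] by fastforce
  qed simp
  moreover have "r (fst p) (snd p) \<le> r' (fst p) (snd p)" if "p \<in> set ps" for p
    using le that \<open>pair_chain ps\<close> unfolding pair_chain_def by blast
  ultimately show ?thesis using \<open>pair_chain ps\<close> by (cases ps) fastforce+
qed

lemma finite_bars_containing:
  assumes "\<And>t. finite {\<beta>\<in>R. t \<in> B \<beta>}" "finite P"
  shows "finite (bars_containing R B P)"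
proof (rule finite_subset)
  show "bars_containing R B P \<subseteq> (\<Union>p\<in>P. {\<beta>\<in>R. fst p \<in> B \<beta>})"
    unfolding bars_containing_def by blast
qed (use assms in blast)

lemma bars_containing_head_Int:
  assumes iv: "is_barcode R B" and "pair_chain (p # q # ps)"
  shows "{\<beta>\<in>R. fst p \<in> B \<beta> \<and> snd p \<in> B \<beta>} \<inter> bars_containing R B (set (q # ps))
    = {\<beta>\<in>R. fst p \<in> B \<beta> \<and> snd q \<in> B \<beta>}" (is "?S1 \<inter> ?S2 = ?S12")
proof -
  have pq: "fst p \<le> fst q" "snd p \<le> snd q" "fst p \<le> snd p" "fst q \<le> snd q"
    and later: "\<And>x. x \<in> set (q # ps) \<Longrightarrow> snd q \<le> snd x"
    using assms(2) unfolding pair_chain_def by auto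
  have conv: "y \<in> B \<beta>" if "\<beta> \<in> R" "x \<in> B \<beta>" "z \<in> B \<beta>" "x \<le> y" "y \<le> z" for \<beta> x y z
    using iv that unfolding is_barcode_def is_interval_def by blast
  show ?thesis
  proof
    show "?S1 \<inter> ?S2 \<subseteq> ?S12"
      unfolding bars_containing_def using conv pq later by (blast intro: order_trans)
    show "?S12 \<subseteq> ?S1 \<inter> ?S2"
      unfolding bars_containing_def using conv pq by (auto intro: bexI[of _ q])
  qed
qed

lemma chain_rank_sum_bars_containing:
  assumes iv: "is_barcode R B" and fin: "\<And>t. finite {\<beta>\<in>R. t \<in> B \<beta>}"
    and r: "\<And>a b. a \<le> b \<Longrightarrow> r a b = int (card {\<beta>\<in>R. a \<in> B \<beta> \<and> b \<in> B \<beta>})"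
    and "pair_chain ps"
  shows "chain_rank_sum r ps = int (card (bars_containing R B (set ps)))"
  using \<open>pair_chain ps\<close>
proof (induction ps rule: induct_list012)
  case (2 p)
  then show ?case using r unfolding pair_chain_def bars_containing_def by auto
next
  case (3 p q ps)
  define S1 where "S1 = {\<beta>\<in>R. fst p \<in> B \<beta> \<and> snd p \<in> B \<beta>}"
  define S2 where "S2 = bars_containing R B (set (q # ps))"
  have "bars_containing R B (set (p # q # ps)) = S1 \<union> S2"
    unfolding S1_def S2_def bars_containing_def by auto
  moreover have "finite S1" unfolding S1_def using fin[of "fst p"] by (rule rev_finite_subset) auto
  moreover have "finite S2" unfolding S2_def using finite_bars_containing[OF fin finite_set] .
  ultimately have "int (card (bars_containing R B (set (p # q # ps))))
      = int (card S1) + int (card S2) - int (card (S1 \<inter> S2))"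
    using card_Un_Int[of S1 S2] by simp
  moreover have "fst p \<le> snd p" "fst p \<le> snd q" using "3.prems" unfolding pair_chain_def by auto
  then have "r (fst p) (snd p) = int (card S1)" "r (fst p) (snd q) = int (card (S1 \<inter> S2))"
    unfolding S1_def S2_def bars_containing_head_Int[OF iv "3.prems"] using r by auto
  ultimately show ?case using "3.IH"(2)[OF pair_chain_ConsD[OF "3.prems"]] unfolding S2_def by simp
qed (simp add: bars_containing_def)

definition innermost_pairs :: "('t::linorder \<times> 't) set \<Rightarrow> ('t \<times> 't) set" where
  "innermost_pairs P = {p\<in>P. \<forall>q\<in>P. fst p \<le> fst q \<and> snd q \<le> snd p \<longrightarrow> q = p}"

lemma innermost_pair_below:
  assumes "finite P" "p \<in> P"
  shows "\<exists>q\<in>innermost_pairs P. fst p \<le> fst q \<and> snd q \<le> snd p"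
proof -
  define D where "D = {q\<in>P. fst p \<le> fst q \<and> snd q \<le> snd p}"
  have fD: "finite D" "p \<in> D" unfolding D_def using assms by auto
  define a where "a = Max (fst ` D)"
  define D1 where "D1 = {q\<in>D. fst q = a}"
  have "a \<in> fst ` D" unfolding a_def using fD by (intro Max_in) auto
  then have D1: "finite D1" "D1 \<noteq> {}" unfolding D1_def using fD by auto
  define b where "b = Min (snd ` D1)"
  have "b \<in> snd ` D1" unfolding b_def using D1 by (intro Min_in) auto
  then obtain q where q: "q \<in> D1" "snd q = b" by auto
  have "q \<in> innermost_pairs P"
    unfolding innermost_pairs_def
  proof (intro CollectI conjI ballI impI)
    show "q \<in> P" using q unfolding D1_def D_def by auto
    fix q' assume q': "q' \<in> P" "fst q \<le> fst q' \<and> snd q' \<le> snd q"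
    then have "q' \<in> D" using q unfolding D1_def D_def by auto
    then have "fst q' \<le> a" unfolding a_def using fD by (intro Max_ge) auto
    then have "q' \<in> D1" using \<open>q' \<in> D\<close> q q' unfolding D1_def by auto
    then have "b \<le> snd q'" unfolding b_def using D1 by (intro Min_le) auto
    then show "q' = q" using q q' \<open>fst q' \<le> a\<close> unfolding D1_def by (auto simp: prod_eq_iff)
  qed
  moreover have "fst p \<le> fst q \<and> snd q \<le> snd p" using q unfolding D1_def D_def by auto
  ultimately show ?thesis by blast
qed

text \<open>Sorted lexicographically, innermost pairs increase in both coordinates: a pair
  \<open>(c, d)\<close> after \<open>(a, b)\<close> with \<open>d < b\<close> would lie inside \<open>(a, b)\<close>.\<close>

lemma pair_chain_innermost_pairs:
  assumes "finite P" "\<And>p. p \<in> P \<Longrightarrow> fst p \<le> snd p"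
  shows "pair_chain (sorted_list_of_set (innermost_pairs P))"
proof -
  have fin: "finite (innermost_pairs P)" unfolding innermost_pairs_def using assms(1) by auto
  have "sorted_wrt (\<lambda>p q. fst p \<le> fst q \<and> snd p \<le> snd q) (sorted_list_of_set (innermost_pairs P))"
  proof (rule sorted_wrt_mono_rel[OF _ strict_sorted_list_of_set])
    fix p q assume "p \<in> set (sorted_list_of_set (innermost_pairs P))"
      "q \<in> set (sorted_list_of_set (innermost_pairs P))" and pq: "p < q"
    then have "p \<in> innermost_pairs P" "q \<in> innermost_pairs P" using fin by auto
    moreover have "fst p \<le> fst q" using pq by (auto simp: less_prod_def)
    ultimately have "snd p \<le> snd q" using pq unfolding innermost_pairs_def by force
    then show "fst p \<le> fst q \<and> snd p \<le> snd q" using \<open>fst p \<le> fst q\<close> by simp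
  qed
  then show ?thesis unfolding pair_chain_def using fin assms(2) by (auto simp: innermost_pairs_def)
qed

lemma pair_chain_below:
  assumes "finite P" "\<And>p. p \<in> P \<Longrightarrow> fst p \<le> snd p"
  obtains ps where "pair_chain ps" "set ps \<subseteq> P"
    "\<And>p. p \<in> P \<Longrightarrow> \<exists>q\<in>set ps. fst p \<le> fst q \<and> snd q \<le> snd p"
proof
  have "finite (innermost_pairs P)" using assms(1) unfolding innermost_pairs_def by simp
  then have "set (sorted_list_of_set (innermost_pairs P)) = innermost_pairs P" by simp
  then show "set (sorted_list_of_set (innermost_pairs P)) \<subseteq> P"
    "\<And>p. p \<in> P \<Longrightarrow> \<exists>q\<in>set (sorted_list_of_set (innermost_pairs P)). fst p \<le> fst q \<and> snd q \<le> snd p"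
    using innermost_pair_below[OF assms(1)] unfolding innermost_pairs_def by auto
qed (rule pair_chain_innermost_pairs[OF assms])

lemma chain_rank_sum_submodule_le:
  assumes "pmod sc Sp Mp" "pfd sc Sp" "\<And>t. module.subspace sc (Sp' t)" "\<And>t. Sp' t \<subseteq> Sp t"
    and "pair_chain ps"
  shows "chain_rank_sum (pmod_rank sc Sp' Mp) ps \<le> chain_rank_sum (pmod_rank sc Sp Mp) ps"
  by (rule chain_rank_sum_mono_right[OF pmod_rank_submodule_diff_le[OF assms(1-4)]
        pmod_rank_submodule_le[OF assms(1,2,4)] assms(5)])

lemma chain_rank_sum_im_space_le:
  assumes "pmod sc1 Sp1 Mp1" "pfd sc1 Sp1" "pmod sc2 Sp2 Mp2" "phom sc1 Sp1 Mp1 sc2 Sp2 Mp2 F"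
    and "pair_chain ps"
  shows "chain_rank_sum (pmod_rank sc2 (im_space Sp1 F) Mp2) ps \<le> chain_rank_sum (pmod_rank sc1 Sp1 Mp1) ps"
  by (rule chain_rank_sum_mono_left[OF pmod_rank_im_space_diff_le[OF assms(1-4)]
        pmod_rank_im_space_le[OF assms(1-4)] assms(5)])

lemma barcode_of_chain_rank_sum:
  assumes "pmod sc Sp Mp" "pfd sc Sp" "barcode_of sc Sp Mp R B" "pair_chain ps"
  shows "chain_rank_sum (pmod_rank sc Sp Mp) ps = int (card (bars_containing R B (set ps)))"
  using chain_rank_sum_bars_containing[OF _ barcode_of_locally_finite[OF assms(1-3)]
      barcode_of_pmod_rank[OF assms(1-3)] assms(4)] assms(3)
  unfolding barcode_of_def by blast

section \<open>Hall's theorem for families with finite neighbourhoods\<close>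

definition hall_cond :: "'a set \<Rightarrow> ('a \<times> 'b) set \<Rightarrow> bool" where
  "hall_cond A E \<longleftrightarrow> (\<forall>S\<subseteq>A. finite S \<longrightarrow> card S \<le> card (E `` S))"

lemma hall_condD: "hall_cond A E \<Longrightarrow> S \<subseteq> A \<Longrightarrow> finite S \<Longrightarrow> card S \<le> card (E `` S)"
  unfolding hall_cond_def by blast

text \<open>Finite rows make Hall's condition compact: the union of a chain of edge sets
  that can each be removed without violating it can be removed as well, so Zorn's lemma applies.\<close>

lemma hall_cond_minimal_exists:
  assumes H: "hall_cond A N" and fin: "\<And>a. a \<in> A \<Longrightarrow> finite (N `` {a})"
  shows "\<exists>E\<subseteq>N. hall_cond A E \<and> (\<forall>e\<in>E. \<not> hall_cond A (E - {e}))"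
proof -
  define \<D> where "\<D> = {D. D \<subseteq> N \<and> hall_cond A (N - D)}"
  have "\<exists>D\<in>\<D>. \<forall>X\<in>\<D>. D \<subseteq> X \<longrightarrow> X = D"
  proof (rule subset_Zorn_nonempty)
    show "\<D> \<noteq> {}" using H unfolding \<D>_def by (auto intro!: exI[of _ "{}"])
  next
    fix \<C> assume "\<C> \<noteq> {}" and ch: "subset.chain \<D> \<C>"
    have C\<D>: "\<C> \<subseteq> \<D>" using ch by (auto simp: subset_chain_def)
    have "card S \<le> card ((N - \<Union>\<C>) `` S)" if S: "S \<subseteq> A" "finite S" for S
    proof -
      define Q where "Q = (N \<inter> (S \<times> UNIV)) \<inter> \<Union>\<C>"
      have "Q \<subseteq> (\<Union>a\<in>S. {a} \<times> N `` {a})" unfolding Q_def by auto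
      moreover have "finite (\<Union>a\<in>S. {a} \<times> N `` {a})" using S fin by auto
      ultimately have "finite Q" by (rule finite_subset)
      moreover have "Q \<subseteq> \<Union>\<C>" unfolding Q_def by blast
      ultimately obtain D where D: "D \<in> \<C>" "Q \<subseteq> D"
        using finite_subset_Union_chain[OF _ _ \<open>\<C> \<noteq> {}\<close> ch] by blast
      then have "(N - D) `` S = (N - \<Union>\<C>) `` S" unfolding Q_def by blast
      moreover have "D \<in> \<D>" using C\<D> D(1) by blast
      then have "card S \<le> card ((N - D) `` S)" using S unfolding \<D>_def hall_cond_def by blast
      ultimately show ?thesis by simp
    qed
    then have "hall_cond A (N - \<Union>\<C>)" unfolding hall_cond_def by blast
    moreover have "\<Union>\<C> \<subseteq> N" using C\<D> unfolding \<D>_def by blast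
    ultimately show "\<Union>\<C> \<in> \<D>" unfolding \<D>_def by blast
  qed
  then obtain D where D: "D \<in> \<D>" and Dmax: "\<And>X. X \<in> \<D> \<Longrightarrow> D \<subseteq> X \<Longrightarrow> X = D" by blast
  have "\<not> hall_cond A ((N - D) - {e})" if e: "e \<in> N - D" for e
  proof
    assume "hall_cond A ((N - D) - {e})"
    moreover have "insert e D \<subseteq> N" using D e unfolding \<D>_def by blast
    moreover have "N - insert e D = (N - D) - {e}" by blast
    ultimately have "insert e D \<in> \<D>" unfolding \<D>_def by simp
    then have "insert e D = D" using Dmax subset_insertI by blast
    then show False using e by blast
  qed
  then show ?thesis using D unfolding \<D>_def by blast
qed

lemma finite_Image_finite_rows:
  assumes "\<And>a. a \<in> A \<Longrightarrow> finite (E `` {a})" "finite S" "S \<subseteq> A"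
  shows "finite (E `` S)"
proof -
  have "E `` S = (\<Union>a\<in>S. E `` {a})" by blast
  then show ?thesis using assms by auto
qed

lemma hall_critical_set:
  assumes H: "hall_cond A E" and crit: "\<not> hall_cond A (E - {(a, z)})"
  shows "\<exists>T\<subseteq>A. finite T \<and> a \<notin> T \<and> card (E `` T \<union> (E `` {a} - {z})) < Suc (card T)"
proof -
  obtain S where S: "S \<subseteq> A" "finite S" "card ((E - {(a, z)}) `` S) < card S"
    using crit unfolding hall_cond_def by (auto simp: not_le)
  have "a \<in> S"
  proof (rule ccontr)
    assume "a \<notin> S"
    then have "(E - {(a, z)}) `` S = E `` S" by auto
    then show False using hall_condD[OF H S(1,2)] S(3) by simp
  qed
  define T where "T = S - {a}"
  have "(E - {(a, z)}) `` S = E `` T \<union> (E `` {a} - {z})" unfolding T_def using \<open>a \<in> S\<close> by auto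
  moreover have "card S = Suc (card T)" unfolding T_def using card_Suc_Diff1[OF S(2) \<open>a \<in> S\<close>] by simp
  moreover have "T \<subseteq> A" "finite T" "a \<notin> T" using S unfolding T_def by auto
  ultimately show ?thesis using S(3) by auto
qed

text \<open>If \<open>a\<close> had two neighbours \<open>x \<noteq> y\<close>, the critical sets \<open>T\<^sub>1, T\<^sub>2\<close> for the edges \<open>(a, x), (a, y)\<close> would
  violate Hall's condition on \<open>insert a (T\<^sub>1 \<union> T\<^sub>2)\<close> or on \<open>T\<^sub>1 \<inter> T\<^sub>2\<close>, by submodularity of \<open>card\<close>.\<close>

lemma hall_minimal_row_singleton:
  assumes H: "hall_cond A E" and min: "\<forall>e\<in>E. \<not> hall_cond A (E - {e})"
    and fin: "\<And>a. a \<in> A \<Longrightarrow> finite (E `` {a})" and a: "a \<in> A"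
  shows "\<exists>b. E `` {a} = {b}"
proof (rule ccontr)
  assume nonsingle: "\<nexists>b. E `` {a} = {b}"
  note finS = finite_Image_finite_rows[OF fin]
  have "card {a} \<le> card (E `` {a})" using hall_condD[OF H, of "{a}"] a by simp
  then have "E `` {a} \<noteq> {}" by auto
  then obtain x where x: "x \<in> E `` {a}" by blast
  then obtain y where y: "y \<in> E `` {a}" "x \<noteq> y" using nonsingle by blast
  have "\<not> hall_cond A (E - {(a, x)})" "\<not> hall_cond A (E - {(a, y)})" using min x y(1) by auto
  from hall_critical_set[OF H this(1)] obtain T1 where T1: "T1 \<subseteq> A" "finite T1" "a \<notin> T1"
    and c1: "card (E `` T1 \<union> (E `` {a} - {x})) < Suc (card T1)" by blast
  from hall_critical_set[OF H \<open>\<not> hall_cond A (E - {(a, y)})\<close>] obtain T2 where T2: "T2 \<subseteq> A"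
    "finite T2" "a \<notin> T2" and c2: "card (E `` T2 \<union> (E `` {a} - {y})) < Suc (card T2)" by blast
  define U1 where "U1 = E `` T1 \<union> (E `` {a} - {x})"
  define U2 where "U2 = E `` T2 \<union> (E `` {a} - {y})"
  have fU: "finite U1" "finite U2" unfolding U1_def U2_def using finS T1 T2 a by auto
  have "card (insert a (T1 \<union> T2)) \<le> card (E `` insert a (T1 \<union> T2))"
    using hall_condD[OF H, of "insert a (T1 \<union> T2)"] T1 T2 a by simp
  also have "\<dots> \<le> card (U1 \<union> U2)"
    by (rule card_mono) (use fU y(2) in \<open>auto simp: U1_def U2_def\<close>)
  finally have 1: "card (insert a (T1 \<union> T2)) \<le> card (U1 \<union> U2)" .
  have "card (T1 \<inter> T2) \<le> card (E `` (T1 \<inter> T2))"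
    using hall_condD[OF H, of "T1 \<inter> T2"] T1 T2 by auto
  also have "\<dots> \<le> card (U1 \<inter> U2)"
    by (rule card_mono) (use fU in \<open>auto simp: U1_def U2_def\<close>)
  finally have 2: "card (T1 \<inter> T2) \<le> card (U1 \<inter> U2)" .
  have "card (insert a (T1 \<union> T2)) = Suc (card (T1 \<union> T2))" using T1 T2 by simp
  moreover have "card (T1 \<union> T2) + card (T1 \<inter> T2) = card T1 + card T2"
    using card_Un_Int[OF T1(2) T2(2)] by simp
  moreover have "card (U1 \<union> U2) + card (U1 \<inter> U2) = card U1 + card U2"
    using card_Un_Int[OF fU] by simp
  ultimately show False using 1 2 c1 c2 unfolding U1_def[symmetric] U2_def[symmetric] by linarith
qed

theorem hall_marriage_finite_rows:
  assumes N: "N \<subseteq> A \<times> B" and fin: "\<And>a. a \<in> A \<Longrightarrow> finite (N `` {a})" and H: "hall_cond A N"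
  shows "\<exists>M\<subseteq>N. is_matching M A B \<and> (\<forall>a\<in>A. \<exists>b. (a, b) \<in> M)"
proof -
  obtain E where E: "E \<subseteq> N" "hall_cond A E" "\<forall>e\<in>E. \<not> hall_cond A (E - {e})"
    using hall_cond_minimal_exists[OF H fin] by blast
  have row: "\<exists>b. E `` {a} = {b}" if "a \<in> A" for a
  proof (rule hall_minimal_row_singleton[OF E(2,3) _ that])
    show "finite (E `` {a})" if "a \<in> A" for a
      using finite_subset[OF Image_mono[OF E(1) order_refl] fin[OF that]] .
  qed
  have row_eq: "E `` {a} = {b}" if "(a, b) \<in> E" for a b
  proof -
    have "a \<in> A" using that E(1) N by blast
    then obtain c where c: "E `` {a} = {c}" using row by blast
    moreover have "b \<in> E `` {a}" using that by blast
    ultimately show ?thesis by simp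
  qed
  have "a = a'" if ab: "(a, b) \<in> E" "(a', b) \<in> E" for a a' b
  proof (rule ccontr)
    assume "a \<noteq> a'"
    have "{a, a'} \<subseteq> A" using ab E(1) N by blast
    then have "card {a, a'} \<le> card (E `` {a, a'})" using hall_condD[OF E(2)] by simp
    moreover have "E `` {a, a'} = {b}" using row_eq[OF ab(1)] row_eq[OF ab(2)] by blast
    ultimately show False using \<open>a \<noteq> a'\<close> by simp
  qed
  moreover have "b = b'" if "(a, b) \<in> E" "(a, b') \<in> E" for a b b'
    using row_eq that by blast
  ultimately have "is_matching E A B" using E(1) N unfolding is_matching_def by blast
  moreover have "\<forall>a\<in>A. \<exists>b. (a, b) \<in> E" using row by blast
  ultimately show ?thesis using E(1) by blast
qed

section \<open>Sub-barcodes\<close>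

text \<open>Only finitely many bars contain a fixed \<open>t \<in> I\<close>; each of them that misses part of \<open>I\<close>
  misses a witness point of \<open>I\<close>, and the extreme witnesses (together with \<open>t\<close>) do the job.\<close>

lemma interval_endpoints_witness:
  assumes I: "is_interval I" and iv: "is_barcode R B" and fin: "\<And>t. finite {\<beta>\<in>R. t \<in> B \<beta>}"
  shows "\<exists>a b. a \<le> b \<and> a \<in> I \<and> b \<in> I \<and> (\<forall>\<beta>\<in>R. a \<in> B \<beta> \<and> b \<in> B \<beta> \<longrightarrow> I \<subseteq> B \<beta>)"
proof -
  obtain t where tI: "t \<in> I" using I unfolding is_interval_def by auto
  define C where "C = {\<beta>\<in>R. t \<in> B \<beta> \<and> \<not> I \<subseteq> B \<beta>}"
  have fC: "finite C" unfolding C_def using fin[of t] by (rule rev_finite_subset) auto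
  have "\<forall>\<beta>\<in>C. \<exists>x. x \<in> I \<and> x \<notin> B \<beta>" unfolding C_def by blast
  then obtain w where w: "\<And>\<beta>. \<beta> \<in> C \<Longrightarrow> w \<beta> \<in> I \<and> w \<beta> \<notin> B \<beta>" by metis
  define W where "W = insert t (w ` C)"
  have W: "finite W" "t \<in> W" "W \<subseteq> I" unfolding W_def using fC tI w by auto
  have aw: "Min W \<le> x" and wb: "x \<le> Max W" if "x \<in> W" for x using W(1) that by auto
  have "I \<subseteq> B \<beta>" if \<beta>: "\<beta> \<in> R" "Min W \<in> B \<beta>" "Max W \<in> B \<beta>" for \<beta>
  proof (rule ccontr)
    have conv: "x \<in> B \<beta>" if "x \<in> W" for x
      using iv \<beta> aw[OF that] wb[OF that] unfolding is_barcode_def is_interval_def by blast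
    assume "\<not> I \<subseteq> B \<beta>"
    with \<beta>(1) conv[OF W(2)] have "\<beta> \<in> C" unfolding C_def by simp
    then have "w \<beta> \<in> W" unfolding W_def by simp
    then show False using w[OF \<open>\<beta> \<in> C\<close>] conv by blast
  qed
  moreover have "Min W \<in> I" "Max W \<in> I" using W Min_in Max_in by blast+
  moreover have "Min W \<le> Max W" using aw[OF W(2)] wb[OF W(2)] by simp
  ultimately show ?thesis by blast
qed

lemma hall_cond_bar_containment:
  assumes A: "is_barcode RA A" "\<And>t. finite {\<alpha>\<in>RA. t \<in> A \<alpha>}"
    and B: "is_barcode RB B" "\<And>t. finite {\<beta>\<in>RB. t \<in> B \<beta>}"
    and le: "\<And>ps. pair_chain ps \<Longrightarrow>
      card (bars_containing RA A (set ps)) \<le> card (bars_containing RB B (set ps))"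
  shows "hall_cond RA {(\<alpha>, \<beta>). \<alpha> \<in> RA \<and> \<beta> \<in> RB \<and> A \<alpha> \<subseteq> B \<beta>}"
    (is "hall_cond RA ?N")
  unfolding hall_cond_def
proof (intro allI impI)
  fix S assume S: "S \<subseteq> RA" "finite S"
  have "\<forall>\<alpha>\<in>RA. \<exists>a b. a \<le> b \<and> a \<in> A \<alpha> \<and> b \<in> A \<alpha> \<and> (\<forall>\<beta>\<in>RB. a \<in> B \<beta> \<and> b \<in> B \<beta> \<longrightarrow> A \<alpha> \<subseteq> B \<beta>)"
    using interval_endpoints_witness[OF _ B] A(1) unfolding is_barcode_def by blast
  then obtain ea eb where e: "\<And>\<alpha>. \<alpha> \<in> RA \<Longrightarrow> ea \<alpha> \<le> eb \<alpha> \<and> ea \<alpha> \<in> A \<alpha> \<and> eb \<alpha> \<in> A \<alpha> \<and>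
      (\<forall>\<beta>\<in>RB. ea \<alpha> \<in> B \<beta> \<and> eb \<alpha> \<in> B \<beta> \<longrightarrow> A \<alpha> \<subseteq> B \<beta>)" by metis
  define P where "P = (\<lambda>\<alpha>. (ea \<alpha>, eb \<alpha>)) ` S"
  have "finite P" unfolding P_def using S(2) by simp
  moreover have "fst p \<le> snd p" if "p \<in> P" for p using that e S(1) unfolding P_def by auto
  ultimately obtain ps where ps: "pair_chain ps" "set ps \<subseteq> P"
    and below: "\<And>p. p \<in> P \<Longrightarrow> \<exists>q\<in>set ps. fst p \<le> fst q \<and> snd q \<le> snd p"
    using pair_chain_below by blast
  have "S \<subseteq> bars_containing RA A (set ps)"
  proof
    fix \<alpha> assume "\<alpha> \<in> S"
    then have "(ea \<alpha>, eb \<alpha>) \<in> P" unfolding P_def by blast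
    then obtain q where q: "q \<in> set ps" "ea \<alpha> \<le> fst q" "snd q \<le> eb \<alpha>"
      using below by fastforce
    have "fst q \<le> snd q" using ps(1) q(1) unfolding pair_chain_def by blast
    then have "fst q \<in> A \<alpha>" "snd q \<in> A \<alpha>"
      using A(1) e[of \<alpha>] \<open>\<alpha> \<in> S\<close> S(1) q unfolding is_barcode_def is_interval_def
      by (meson order_trans subsetD)+
    then show "\<alpha> \<in> bars_containing RA A (set ps)"
      unfolding bars_containing_def using \<open>\<alpha> \<in> S\<close> S(1) q(1) by blast
  qed
  moreover have "bars_containing RB B (set ps) \<subseteq> ?N `` S"
    using ps(2) e S(1) unfolding bars_containing_def P_def by fastforce
  moreover have "finite (bars_containing RA A (set ps))"
    using finite_bars_containing[OF A(2) finite_set] .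
  moreover have "finite (?N `` S)"
    by (rule finite_subset[OF _ finite_UN_I[OF S(2) B(2), of ea]]) (use S(1) e in blast)
  ultimately show "card S \<le> card (?N `` S)"
    using le[OF ps(1)] card_mono by (meson order_trans)
qed

lemma sub_barcode_if_chain_counts_le:
  assumes A: "is_barcode RA A" "\<And>t. finite {\<alpha>\<in>RA. t \<in> A \<alpha>}"
    and B: "is_barcode RB B" "\<And>t. finite {\<beta>\<in>RB. t \<in> B \<beta>}"
    and le: "\<And>ps. pair_chain ps \<Longrightarrow>
      card (bars_containing RA A (set ps)) \<le> card (bars_containing RB B (set ps))"
  shows "sub_barcode RA A RB B"
proof -
  define N where "N = {(\<alpha>, \<beta>). \<alpha> \<in> RA \<and> \<beta> \<in> RB \<and> A \<alpha> \<subseteq> B \<beta>}"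
  have fin: "finite (N `` {\<alpha>})" if "\<alpha> \<in> RA" for \<alpha>
  proof -
    have "A \<alpha> \<noteq> {}" using A(1) that unfolding is_barcode_def is_interval_def by simp
    then obtain t where "t \<in> A \<alpha>" by blast
    then have "N `` {\<alpha>} \<subseteq> {\<beta>\<in>RB. t \<in> B \<beta>}" unfolding N_def by blast
    then show ?thesis using B(2)[of t] finite_subset by blast
  qed
  have "N \<subseteq> RA \<times> RB" unfolding N_def by blast
  moreover have "hall_cond RA N" unfolding N_def by (rule hall_cond_bar_containment[OF assms])
  ultimately obtain M where M: "M \<subseteq> N" "is_matching M RA RB" "\<forall>\<alpha>\<in>RA. \<exists>\<beta>. (\<alpha>, \<beta>) \<in> M"
    using hall_marriage_finite_rows[of N RA RB] fin by blast
  moreover have "\<forall>(\<alpha>, \<beta>)\<in>M. A \<alpha> \<subseteq> B \<beta>" using M(1) unfolding N_def by auto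
  ultimately show ?thesis unfolding sub_barcode_def by (intro exI[of _ M] conjI)
qed

theorem theorem3p3:
  fixes scT :: "'k::field \<Rightarrow> 'a::ab_group_add \<Rightarrow> 'a" and ST :: "'t::linorder \<Rightarrow> 'a set" and MT :: "'t \<Rightarrow> 't \<Rightarrow> 'a \<Rightarrow> 'a"
    and scU :: "'k \<Rightarrow> 'b::ab_group_add \<Rightarrow> 'b" and SU :: "'t \<Rightarrow> 'b set" and MU :: "'t \<Rightarrow> 't \<Rightarrow> 'b \<Rightarrow> 'b"
    and scV :: "'k \<Rightarrow> 'c::ab_group_add \<Rightarrow> 'c" and SV :: "'t \<Rightarrow> 'c set" and MV :: "'t \<Rightarrow> 't \<Rightarrow> 'c \<Rightarrow> 'c"
    and scW :: "'k \<Rightarrow> 'd::ab_group_add \<Rightarrow> 'd" and SW :: "'t \<Rightarrow> 'd set" and MW :: "'t \<Rightarrow> 't \<Rightarrow> 'd \<Rightarrow> 'd"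
    and F :: "'t \<Rightarrow> 'b \<Rightarrow> 'c" and G :: "'t \<Rightarrow> 'a \<Rightarrow> 'd"
    and \<phi>1 :: "'t \<Rightarrow> 'a \<Rightarrow> 'b" and \<phi>2 :: "'t \<Rightarrow> 'c \<Rightarrow> 'd"
    and RG :: "'x set" and BG :: "'x \<Rightarrow> 't set"
    and RF :: "'y set" and BF :: "'y \<Rightarrow> 't set"
  assumes "pmod scT ST MT" "pfd scT ST"
    and "pmod scU SU MU" "pfd scU SU"
    and "pmod scV SV MV" "pfd scV SV"
    and "pmod scW SW MW" "pfd scW SW"
    and "phom scU SU MU scV SV MV F"
    and "phom scT ST MT scW SW MW G"
    and "phom scT ST MT scU SU MU \<phi>1"
    and "phom scV SV MV scW SW MW \<phi>2"
    and "\<forall>t. \<forall>x\<in>ST t. G t x = \<phi>2 t (F t (\<phi>1 t x))"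
    and "barcode_of scW (im_space ST G) MW RG BG"
    and "barcode_of scV (im_space SU F) MV RF BF"
  shows "sub_barcode RG BG RF BF"
proof -
  define Y where "Y = im_space SU F"
  define Z where "Z = im_space Y \<phi>2"
  have X: "pmod scW (im_space ST G) MW" "pfd scW (im_space ST G)"
    using pmod_im_space[OF assms(1,7,10)] pfd_im_space[OF assms(1,2,7,10)] .
  have Y: "pmod scV Y MV" "pfd scV Y" and bcY: "barcode_of scV Y MV RF BF"
    unfolding Y_def using pmod_im_space[OF assms(3,5,9)] pfd_im_space[OF assms(3,4,5,9)] assms(15) .
  have \<phi>2Y: "phom scV Y MV scW SW MW \<phi>2"
    unfolding Y_def using phom_restrict[OF assms(12) im_space_subset[OF assms(9)]] .
  have Z: "pmod scW Z MW" "pfd scW Z"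
    unfolding Z_def using pmod_im_space[OF Y(1) assms(7) \<phi>2Y] pfd_im_space[OF Y assms(7) \<phi>2Y] .
  have XZ: "im_space ST G t \<subseteq> Z t" for t
    unfolding Z_def Y_def using im_space_factorization_subset[where F=F and \<psi>=\<phi>2, OF assms(11,13)] .
  have "card (bars_containing RG BG (set ps)) \<le> card (bars_containing RF BF (set ps))"
    if ps: "pair_chain ps" for ps
  proof -
    have "chain_rank_sum (pmod_rank scW (im_space ST G) MW) ps \<le> chain_rank_sum (pmod_rank scW Z MW) ps"
      using chain_rank_sum_submodule_le[OF Z pmod_subspace[OF X(1)] XZ ps] .
    also have "\<dots> \<le> chain_rank_sum (pmod_rank scV Y MV) ps"
      unfolding Z_def using chain_rank_sum_im_space_le[OF Y assms(7) \<phi>2Y ps] .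
    finally show ?thesis
      unfolding barcode_of_chain_rank_sum[OF X assms(14) ps] barcode_of_chain_rank_sum[OF Y bcY ps] by simp
  qed
  moreover have "is_barcode RG BG" "is_barcode RF BF"
    using assms(14) bcY unfolding barcode_of_def by blast+
  ultimately show ?thesis
    using sub_barcode_if_chain_counts_le barcode_of_locally_finite[OF X assms(14)]
      barcode_of_locally_finite[OF Y bcY] by blast
qed

end
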